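(* The five families of test equations for polycyclic presentations are irredundant: for each $t\in\{1,2,3,4,5\}$ there exists a polycyclic presentation for which some test equation of type (T$t$) fails while all test equations of the other four types hold, where the types are (T1) $c(g_j\,g^{a_{j,k}}\,g_i)=c(g_kg_jg_i)$ for $k>j>i$; (T2) $c(g_j^{r_j}g_i)=c(g^{e_j}g_i)$ for $r_j<\infty$, $j>i$; (T3) $c(g_jg_i^{r_i})=c(g_j\,g^{e_i})$ for $r_i<\infty$, $j>i$; (T4) $c(g_jg_i^{-1}g_i)=c(g_j)$ for $r_i=\infty$, $j>i$; (T5) $c(g_i^{r_i+1})=c(g_i\,g^{e_i})$ for $r_i<\infty$. In particular, no proper subset of these families suffices to detect inconsistency in general.
   Context: A polycyclic presentation $\mathcal P$ on generators $g_1,\ldots,g_n$ consists of $r_1,\ldots,r_n\in\mathbb N\cup\{\infty\}$ and integers $e_{i,k},a_{i,j,k},b_{i,j,k}$ ($1\le i<j\le n$, $1\le k\le n$) with $0\le e_{i,k},a_{i,j,k},b_{i,j,k}<r_k$ whenever $r_k<\infty$, and has defining relations $g_i^{r_i}=g^{e_i}$ (for $r_i<\infty$), $g_jg_i=g_ig^{a_{i,j}}$ (for $i<j$), $g_jg_i^{-1}=g_i^{-1}g^{b_{i,j}}$ (for $i<j$, $r_i=\infty$), where $g^{e_i}=g_{i+1}^{e_{i,i+1}}\cdots g_n^{e_{i,n}}$, $g^{a_{i,j}}=g_{i+1}^{a_{i,j,i+1}}\cdots g_n^{a_{i,j,n}}$, $g^{b_{i,j}}=g_{i+1}^{b_{i,j,i+1}}\cdots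 g_n^{b_{i,j,n}}$ (with $g_k^x$ for $x<0$ meaning $(g_k^{-1})^{|x|}$). From the presentation one computes integers $c_{i,j,k},d_{i,j,k},f_{i,k}$ (in $[0,r_k)$ when $r_k<\infty$) such that in the presented group $g_j^{-1}g_i=g_ig^{c_{i,j}}$ ($i<j$, $r_j=\infty$), $g_j^{-1}g_i^{-1}=g_i^{-1}g^{d_{i,j}}$ ($i<j$, $r_i=r_j=\infty$), $g_i^{-1}=g_i^{r_i-1}g^{f_i}$ ($r_i<\infty$). Let $M$ be the free monoid on $\{g_1^{\pm1},\ldots,g_n^{\pm1}\}$. A collection step replaces a subword equal to the left-hand side of one of these six kinds of relations by its right-hand side, or deletes $g_ig_i^{-1}$ or $g_i^{-1}g_i$; a word admitting no step is reduced. The collection-to-the-left algorithm applies steps, always choosing the leftmost occurrence of a non-reduced subword involving a generator of smallest index (lower index has priority), until the word is reduced; $c\colon M\to M$ maps a word to the result. A presentation is consistent if every element of the presented group is represented by exactly one reduced word. *)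

theory Defs
  imports Main
begin

text \<open>Letters of the free monoid M: (k, True) is g_k, (k, False) is g_k^{-1}.\<close>
type_synonym gword = "(nat \<times> bool) list"

text \<open>A polycyclic presentation on generators g_1..g_n.
  prel k = None means r_k = infinity, prel k = Some r means r_k = r.
  pexp i k = e_{i,k},  pconj i j k = a_{i,j,k},  piconj i j k = b_{i,j,k}.\<close>
record pcp =
  ngen :: nat
  prel :: "nat \<Rightarrow> nat option"
  pexp :: "nat \<Rightarrow> nat \<Rightarrow> int"
  pconj :: "nat \<Rightarrow> nat \<Rightarrow> nat \<Rightarrow> int"
  piconj :: "nat \<Rightarrow> nat \<Rightarrow> nat \<Rightarrow> int"

definition in_range :: "pcp \<Rightarrow> nat \<Rightarrow> int \<Rightarrow> bool" where
  "in_range P k x = (case prel P k of None \<Rightarrow> True | Some r \<Rightarrow> 0 \<le> x \<and> x < int r)"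

definition is_pcp :: "pcp \<Rightarrow> bool" where
  "is_pcp P = (let n = ngen P in
     (\<forall>k\<in>{1..n}. \<forall>r. prel P k = Some r \<longrightarrow> r \<ge> 1) \<and>
     (\<forall>i\<in>{1..n}. \<forall>k\<in>{1..n}. in_range P k (pexp P i k)) \<and>
     (\<forall>i j k. 1 \<le> i \<and> i < j \<and> j \<le> n \<and> 1 \<le> k \<and> k \<le> n \<longrightarrow>
        in_range P k (pconj P i j k) \<and> in_range P k (piconj P i j k)))"

definition gpow :: "nat \<Rightarrow> int \<Rightarrow> gword" where
  "gpow k x = (if 0 \<le> x then replicate (nat x) (k, True) else replicate (nat (- x)) (k, False))"

definition gvec :: "pcp \<Rightarrow> (nat \<Rightarrow> int) \<Rightarrow> nat \<Rightarrow> gword" where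
  "gvec P v i = concat (map (\<lambda>k. gpow k (v k)) [Suc i..<Suc (ngen P)])"

definition winv :: "gword \<Rightarrow> gword" where
  "winv w = rev (map (\<lambda>(k, s). (k, \<not> s)) w)"

definition wexp :: "gword \<Rightarrow> nat \<Rightarrow> int" where
  "wexp w k = int (count_list w (k, True)) - int (count_list w (k, False))"

type_synonym tables = "(nat \<Rightarrow> nat \<Rightarrow> nat \<Rightarrow> int) \<times> (nat \<Rightarrow> nat \<Rightarrow> nat \<Rightarrow> int) \<times> (nat \<Rightarrow> nat \<Rightarrow> int)"

definition tc :: "tables \<Rightarrow> nat \<Rightarrow> nat \<Rightarrow> nat \<Rightarrow> int" where "tc T = fst T"
definition td :: "tables \<Rightarrow> nat \<Rightarrow> nat \<Rightarrow> nat \<Rightarrow> int" where "td T = fst (snd T)"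
definition tf :: "tables \<Rightarrow> nat \<Rightarrow> nat \<Rightarrow> int" where "tf T = snd (snd T)"

text \<open>A two-letter conjugation redex starting at p
  involves the smaller generator of the next letter and therefore has priority over the
  redexes starting at p that only involve the generator of the letter at p.  Among the
  latter (which all have the same index), free cancellation is preferred.\<close>
definition redex :: "pcp \<Rightarrow> tables \<Rightarrow> gword \<Rightarrow> nat \<Rightarrow> (nat \<times> gword) option" where
  "redex P T w p =
    (if length w \<le> p then None else
     (let j = fst (w ! p); sj = snd (w ! p); pre = take p w;
          hasnext = Suc p < length w;
          i = fst (w ! Suc p); si = snd (w ! Suc p);
          pair = (if \<not> hasnext \<or> \<not> i < j then None
                  else if sj \<and> si then Some ((i, True) # gvec P (pconj P i j) i)
                  else if sj \<and> \<not> si \<and> prel P i = None then Some ((i, False) # gvec P (piconj P i j) i)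
                  else if \<not> sj \<and> si \<and> prel P j = None then Some ((i, True) # gvec P (tc T i j) i)
                  else if \<not> sj \<and> \<not> si \<and> prel P i = None \<and> prel P j = None
                    then Some ((i, False) # gvec P (td T i j) i)
                  else None)
      in case pair of
           Some rhs \<Rightarrow> Some (i, pre @ rhs @ drop (Suc (Suc p)) w)
         | None \<Rightarrow>
           (if hasnext \<and> w ! Suc p = (j, \<not> sj) then Some (j, pre @ drop (Suc (Suc p)) w)
            else case prel P j of
              None \<Rightarrow> None
            | Some r \<Rightarrow>
                (if sj then
                   (if p + r \<le> length w \<and> take r (drop p w) = replicate r (j, True)
                    then Some (j, pre @ gvec P (pexp P j) j @ drop (p + r) w) else None)
                 else Some (j, pre @ replicate (r - 1) (j, True) @ gvec P (tf T j) j @ drop (Suc p) w)))))"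

definition cstep :: "pcp \<Rightarrow> tables \<Rightarrow> gword \<Rightarrow> gword option" where
  "cstep P T w =
    (let ps = filter (\<lambda>p. redex P T w p \<noteq> None) [0..<length w] in
     if ps = [] then None else
     (let m = Min (set (map (\<lambda>p. fst (the (redex P T w p))) ps));
          p = hd (filter (\<lambda>p. fst (the (redex P T w p)) = m) ps)
      in Some (snd (the (redex P T w p)))))"

inductive collects :: "pcp \<Rightarrow> tables \<Rightarrow> gword \<Rightarrow> gword \<Rightarrow> bool" for P T where
  coll_done: "cstep P T w = None \<Longrightarrow> collects P T w w"
| coll_step: "cstep P T w = Some w' \<Longrightarrow> collects P T w' v \<Longrightarrow> collects P T w v"

definition coll :: "pcp \<Rightarrow> tables \<Rightarrow> gword \<Rightarrow> gword" where
  "coll P T w = (THE v. collects P T w v)"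

text \<open>Computation of c, d, f from top index down: for index i,
  g^{c_{i,j}} = collected (g^{a_{i,j}})^{-1},  g^{d_{i,j}} = collected (g^{b_{i,j}})^{-1},
  g^{f_i} = collected (g^{e_i})^{-1}; these only involve generators of index > i,
  whose tables have already been computed.\<close>
fun tabs :: "pcp \<Rightarrow> nat \<Rightarrow> tables" where
  "tabs P 0 = (\<lambda>_ _ _. 0, \<lambda>_ _ _. 0, \<lambda>_ _. 0)"
| "tabs P (Suc m) =
    (let T = tabs P m; i = ngen P - m in
     (\<lambda>i' j k. if i' = i then wexp (coll P T (winv (gvec P (pconj P i j) i))) k else tc T i' j k,
      \<lambda>i' j k. if i' = i then wexp (coll P T (winv (gvec P (piconj P i j) i))) k else td T i' j k,
      \<lambda>i' k. if i' = i then wexp (coll P T (winv (gvec P (pexp P i) i))) k else tf T i' k))"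

definition collect :: "pcp \<Rightarrow> gword \<Rightarrow> gword" where
  "collect P w = coll P (tabs P (ngen P)) w"

definition gen :: "nat \<Rightarrow> nat \<times> bool" where "gen k = (k, True)"
definition geninv :: "nat \<Rightarrow> nat \<times> bool" where "geninv k = (k, False)"

definition T1 :: "pcp \<Rightarrow> bool" where
  "T1 P = (\<forall>i j k. 1 \<le> i \<and> i < j \<and> j < k \<and> k \<le> ngen P \<longrightarrow>
     collect P ([gen j] @ gvec P (pconj P j k) j @ [gen i]) = collect P [gen k, gen j, gen i])"

definition T2 :: "pcp \<Rightarrow> bool" where
  "T2 P = (\<forall>i j r. 1 \<le> i \<and> i < j \<and> j \<le> ngen P \<and> prel P j = Some r \<longrightarrow>
     collect P (replicate r (gen j) @ [gen i]) = collect P (gvec P (pexp P j) j @ [gen i]))"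

definition T3 :: "pcp \<Rightarrow> bool" where
  "T3 P = (\<forall>i j r. 1 \<le> i \<and> i < j \<and> j \<le> ngen P \<and> prel P i = Some r \<longrightarrow>
     collect P (gen j # replicate r (gen i)) = collect P (gen j # gvec P (pexp P i) i))"

definition T4 :: "pcp \<Rightarrow> bool" where
  "T4 P = (\<forall>i j. 1 \<le> i \<and> i < j \<and> j \<le> ngen P \<and> prel P i = None \<longrightarrow>
     collect P [gen j, geninv i, gen i] = collect P [gen j])"

definition T5 :: "pcp \<Rightarrow> bool" where
  "T5 P = (\<forall>i r. 1 \<le> i \<and> i \<le> ngen P \<and> prel P i = Some r \<longrightarrow>
     collect P (replicate (Suc r) (gen i)) = collect P (gen i # gvec P (pexp P i) i))"

definition test_eqs :: "pcp \<Rightarrow> nat \<Rightarrow> bool" where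
  "test_eqs P t = (if t = 1 then T1 P else if t = 2 then T2 P else if t = 3 then T3 P
                   else if t = 4 then T4 P else T5 P)"

end

theory Submission
  imports Defs
begin

text \<open>
  Each family of test equations checks one consistency condition of the relations: (T1) the
  conjugation relations of three generators are compatible, (T2) conjugation by \<open>g\<^sub>i\<close> respects the
  power relations of later generators, (T3) its \<open>r\<^sub>i\<close>-th power is conjugation by the right-hand side
  of the power relation of \<open>g\<^sub>i\<close>, (T4) conjugation by \<open>g\<^sub>i\<^sup>-\<^sup>1\<close> inverts it, and (T5) \<open>g\<^sub>i\<close>
  commutes with the right-hand side of its power relation. For each family we give a presentation
  violating exactly that condition. The test equations of a presentation are finitely many
  equalities between collected words, and collection is deterministic, so they are decided by
  running the collection algorithm.
\<close>

text \<open>As a code equation, this lets \<open>code_simp\<close> run collection on concrete words.\<close>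

lemma coll_unfold [code]:
  "coll P T w = (case cstep P T w of None \<Rightarrow> w | Some w' \<Rightarrow> coll P T w')"
  by (cases "cstep P T w") (simp_all add: coll_def collects.simps[of P T w])

definition test_words :: "pcp \<Rightarrow> nat \<Rightarrow> (gword \<times> gword) list" where
  "test_words P t =
    (let gens = [1..<Suc (ngen P)];
         finite_rel_order = (\<lambda>k. case prel P k of None \<Rightarrow> [] | Some r \<Rightarrow> [r])
     in if t = 1 then [([gen j] @ gvec P (pconj P j k) j @ [gen i], [gen k, gen j, gen i]).
                         k \<leftarrow> gens, j \<leftarrow> [1..<k], i \<leftarrow> [1..<j]]
        else if t = 2 then [(replicate r (gen j) @ [gen i], gvec P (pexp P j) j @ [gen i]).
                              j \<leftarrow> gens, i \<leftarrow> [1..<j], r \<leftarrow> finite_rel_order j]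
        else if t = 3 then [(gen j # replicate r (gen i), gen j # gvec P (pexp P i) i).
                              j \<leftarrow> gens, i \<leftarrow> [1..<j], r \<leftarrow> finite_rel_order i]
        else if t = 4 then [([gen j, geninv i, gen i], [gen j]).
                              j \<leftarrow> gens, i \<leftarrow> [1..<j], prel P i = None]
        else [(replicate (Suc r) (gen i), gen i # gvec P (pexp P i) i).
                i \<leftarrow> gens, r \<leftarrow> finite_rel_order i])"

text \<open>Keeping the tables arbitrary avoids evaluating \<open>tabs\<close>; this suffices below because the
  collections there never consult the tables.\<close>
definition test_eqs_with_tables :: "pcp \<Rightarrow> tables \<Rightarrow> nat \<Rightarrow> bool" where
  "test_eqs_with_tables P T t = list_all (\<lambda>(u, v). coll P T u = coll P T v) (test_words P t)"

lemma test_eqs_iff_with_tables: "test_eqs P t \<longleftrightarrow> test_eqs_with_tables P (tabs P (ngen P)) t"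
  unfolding test_eqs_with_tables_def collect_def[symmetric] test_eqs_def test_words_def
    T1_def T2_def T3_def T4_def T5_def list_all_iff Let_def
  by (auto simp del: upt_Suc split: option.splits)

lemma separating_pcp_witness:
  assumes "map (test_eqs_with_tables P (tabs P (ngen P))) [1..<6] = map (\<lambda>s. s \<noteq> t) [1..<6]"
    and "is_pcp P" and "t \<in> {1..5}"
  shows "\<exists>P. is_pcp P \<and> \<not> test_eqs P t \<and> (\<forall>s \<in> {1..5}. s \<noteq> t \<longrightarrow> test_eqs P s)"
proof -
  have "test_eqs P s \<longleftrightarrow> s \<noteq> t" if "s \<in> {1..5}" for s
    using assms(1) that unfolding map_eq_conv test_eqs_iff_with_tables by auto
  then show ?thesis using assms(2,3) by blast
qed

text \<open>Conjugation by \<open>g\<^sub>1\<close> fixes \<open>g\<^sub>2\<close> and swaps \<open>g\<^sub>3\<close> with the central element \<open>g\<^sub>4\<close> of the dihedral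
  group \<open>\<langle>g\<^sub>2, g\<^sub>3, g\<^sub>4\<rangle>\<close>, which respects all power relations but not \<open>g\<^sub>3 g\<^sub>2 = g\<^sub>2 g\<^sub>3 g\<^sub>4\<close>.\<close>
definition pcp_failing_T1 :: pcp where
  "pcp_failing_T1 = \<lparr>ngen = 4,
     prel = (\<lambda>k. if k \<in> {1..4} then Some 2 else None),
     pexp = (\<lambda>i k. 0),
     pconj = (\<lambda>i j k. if (i, j, k) \<in> {(1, 2, 2), (1, 3, 4), (1, 4, 3),
                                      (2, 3, 3), (2, 3, 4), (2, 4, 4), (3, 4, 4)} then 1 else 0),
     piconj = (\<lambda>i j k. 0)\<rparr>"

text \<open>Here \<open>\<langle>g\<^sub>2\<rangle>\<close> is cyclic of order 6 with \<open>g\<^sub>3 = g\<^sub>2\<^sup>2\<close>; conjugation by \<open>g\<^sub>1\<close> maps \<open>g\<^sub>2\<close> to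
  \<open>g\<^sub>2 g\<^sub>3 = g\<^sub>2\<^sup>3\<close> but fixes \<open>g\<^sub>3\<close> instead of mapping it to \<open>g\<^sub>2\<^sup>6 = 1\<close>.\<close>
definition pcp_failing_T2 :: pcp where
  "pcp_failing_T2 = \<lparr>ngen = 3,
     prel = (\<lambda>k. if k = 2 then Some 2 else if k = 3 then Some 3 else None),
     pexp = (\<lambda>i k. if (i, k) = (2, 3) then 1 else 0),
     pconj = (\<lambda>i j k. if (i, j, k) \<in> {(1, 2, 2), (1, 2, 3), (1, 3, 3), (2, 3, 3)} then 1 else 0),
     piconj = (\<lambda>i j k. if (i, j, k) \<in> {(1, 2, 2), (1, 3, 3)} then 1
                      else if (i, j, k) = (1, 2, 3) then 2 else 0)\<rparr>"

text \<open>Although \<open>g\<^sub>1\<^sup>2 = 1\<close>, conjugating twice by \<open>g\<^sub>1\<close> maps \<open>g\<^sub>2\<close> to \<open>g\<^sub>2\<^sup>4 = 1\<close>.\<close>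
definition pcp_failing_T3 :: pcp where
  "pcp_failing_T3 = \<lparr>ngen = 2,
     prel = (\<lambda>k. if k = 1 then Some 2 else if k = 2 then Some 4 else None),
     pexp = (\<lambda>i k. 0),
     pconj = (\<lambda>i j k. if (i, j, k) = (1, 2, 2) then 2 else 0),
     piconj = (\<lambda>i j k. 0)\<rparr>"

text \<open>Conjugation by \<open>g\<^sub>1\<close> fixes \<open>g\<^sub>2\<close>, conjugation by \<open>g\<^sub>1\<^sup>-\<^sup>1\<close> squares it.\<close>
definition pcp_failing_T4 :: pcp where
  "pcp_failing_T4 = \<lparr>ngen = 2,
     prel = (\<lambda>k. None),
     pexp = (\<lambda>i k. 0),
     pconj = (\<lambda>i j k. if (i, j, k) = (1, 2, 2) then 1 else 0),
     piconj = (\<lambda>i j k. if (i, j, k) = (1, 2, 2) then 2 else 0)\<rparr>"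

text \<open>Although \<open>g\<^sub>1\<^sup>2 = g\<^sub>2\<close>, conjugation by \<open>g\<^sub>1\<close> does not fix \<open>g\<^sub>2\<close> but squares it.\<close>
definition pcp_failing_T5 :: pcp where
  "pcp_failing_T5 = \<lparr>ngen = 2,
     prel = (\<lambda>k. if k = 1 then Some 2 else if k = 2 then Some 3 else None),
     pexp = (\<lambda>i k. if (i, k) = (1, 2) then 1 else 0),
     pconj = (\<lambda>i j k. if (i, j, k) = (1, 2, 2) then 2 else 0),
     piconj = (\<lambda>i j k. 0)\<rparr>"

lemma is_pcp_failing:
  "is_pcp pcp_failing_T1" "is_pcp pcp_failing_T2" "is_pcp pcp_failing_T3"
  "is_pcp pcp_failing_T4" "is_pcp pcp_failing_T5"
  unfolding is_pcp_def in_range_def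
  by (auto simp: pcp_failing_T1_def pcp_failing_T2_def pcp_failing_T3_def pcp_failing_T4_def
      pcp_failing_T5_def)

lemma test_eqs_with_tables_pcp_failing:
  "map (test_eqs_with_tables pcp_failing_T1 T) [1..<6] = map (\<lambda>s. s \<noteq> 1) [1..<6]"
  "map (test_eqs_with_tables pcp_failing_T2 T) [1..<6] = map (\<lambda>s. s \<noteq> 2) [1..<6]"
  "map (test_eqs_with_tables pcp_failing_T3 T) [1..<6] = map (\<lambda>s. s \<noteq> 3) [1..<6]"
  "map (test_eqs_with_tables pcp_failing_T4 T) [1..<6] = map (\<lambda>s. s \<noteq> 4) [1..<6]"
  "map (test_eqs_with_tables pcp_failing_T5 T) [1..<6] = map (\<lambda>s. s \<noteq> 5) [1..<6]"
  by code_simp+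

lemmas separating_pcp_witnesses =
  separating_pcp_witness[OF test_eqs_with_tables_pcp_failing(1) is_pcp_failing(1)]
  separating_pcp_witness[OF test_eqs_with_tables_pcp_failing(2) is_pcp_failing(2)]
  separating_pcp_witness[OF test_eqs_with_tables_pcp_failing(3) is_pcp_failing(3)]
  separating_pcp_witness[OF test_eqs_with_tables_pcp_failing(4) is_pcp_failing(4)]
  separating_pcp_witness[OF test_eqs_with_tables_pcp_failing(5) is_pcp_failing(5)]

theorem proposition18:
  shows "\<forall>t \<in> {1..5::nat}. \<exists>P. is_pcp P \<and> \<not> test_eqs P t \<and>
           (\<forall>s \<in> {1..5::nat}. s \<noteq> t \<longrightarrow> test_eqs P s)"
proof
  fix t :: nat
  assume "t \<in> {1..5}"
  then consider "t = 1" | "t = 2" | "t = 3" | "t = 4" | "t = 5" by fastforce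
  then show "\<exists>P. is_pcp P \<and> \<not> test_eqs P t \<and> (\<forall>s \<in> {1..5}. s \<noteq> t \<longrightarrow> test_eqs P s)"
    by cases (use separating_pcp_witnesses in simp_all)
qed

end
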